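(* Let $\mathbf{X}$ be a finitely supported real random variable with $\mathbf{E}[\mathbf{X}]=0$ and $\mathrm{Var}[\mathbf{X}]=1$. Let $q(x)$ be a multilinear polynomial over $\mathbb{R}^n$ of degree at most $d$ with $\mathrm{sparsity}(q)=T$. Then for $\mathbf{x}\sim\mathbf{X}^{\otimes n}$, the random variable $q(\mathbf{x})$ takes at least $\frac{1}{2d^2}\log(T)-3$ distinct output values.
   Context: A multilinear polynomial of degree at most $d$ is $q(x)=\sum_{|S|\le d}\widehat{q}(S)\prod_{i\in S}x_i$; $\mathrm{sparsity}(q)$ is its number of nonzero coefficients. $\log$ denotes the logarithm to base $2$. $\mathbf{X}^{\otimes n}$ is a vector of $n$ i.i.d. copies of $\mathbf{X}$. *)

theory Defs
  imports "HOL-Probability.Probability"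
begin

(* A multilinear polynomial over R^n (variables x_0..x_{n-1}) is represented by its
   coefficient function c :: nat set => real, c S = \<hat>q(S). *)
definition is_multilinear_poly :: "nat \<Rightarrow> nat \<Rightarrow> (nat set \<Rightarrow> real) \<Rightarrow> bool" where
  "is_multilinear_poly n d c \<longleftrightarrow> (\<forall>S. c S \<noteq> 0 \<longrightarrow> S \<subseteq> {..<n} \<and> card S \<le> d)"

definition mpoly_eval :: "nat \<Rightarrow> (nat set \<Rightarrow> real) \<Rightarrow> (nat \<Rightarrow> real) \<Rightarrow> real" where
  "mpoly_eval n c x = (\<Sum>S\<in>Pow {..<n}. c S * (\<Prod>i\<in>S. x i))"

definition sparsity :: "(nat set \<Rightarrow> real) \<Rightarrow> nat" where
  "sparsity c = card {S. c S \<noteq> 0}"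

end

(*
  Since Var X = 1, X has two support points a \<noteq> b. On the points of {a,b}^n, with U \<subseteq> {..<n}
  the set of coordinates equal to b, q becomes a function F of degree at most d on the Boolean
  cube Pow {..<n}, taking k \<le> K values, K the number of values of q(x).

  Every variable i of a monomial of q is relevant for F: if S \<ni> i is maximal among the
  monomials, the finite difference of F along S equals c S (b - a)^|S| \<noteq> 0 on every subcube, so
  F changes in direction i at 2^(n - d) points at least. The k indicators of the level sets of F
  have degree at most d (k - 1), so by Parseval their total influence is at most 4 d (k - 1) 2^n.
  Hence q involves at most 4 d (k - 1) 2^d variables, and T \<le> (4 d K 2^d)^d.
*)
theory Submission
  imports Defs
begin

section \<open>Walsh analysis on the Boolean cube\<close>

definition toggle :: "'a \<Rightarrow> 'a set \<Rightarrow> 'a set" where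
  "toggle j U = (if j \<in> U then U - {j} else insert j U)"

lemma sum_Pow_toggle:
  assumes "j \<in> N"
  shows "(\<Sum>U\<in>Pow N. f (toggle j U)) = (\<Sum>U\<in>Pow N. f U)"
  by (rule sum.reindex_bij_witness[where i="toggle j" and j="toggle j"])
     (use assms in \<open>auto simp: toggle_def\<close>)

lemma sum_Pow_eq_0_if_toggle_neg:
  fixes f :: "'a set \<Rightarrow> real"
  assumes "j \<in> N" "\<And>U. U \<subseteq> N \<Longrightarrow> f (toggle j U) = - f U"
  shows "(\<Sum>U\<in>Pow N. f U) = 0"
proof -
  have "(\<Sum>U\<in>Pow N. f U) = (\<Sum>U\<in>Pow N. f (toggle j U))"
    by (rule sum_Pow_toggle[OF assms(1), symmetric])
  also have "\<dots> = - (\<Sum>U\<in>Pow N. f U)"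
    using assms(2) by (simp add: sum_negf)
  finally show ?thesis by simp
qed

definition walsh :: "'a set \<Rightarrow> 'a set \<Rightarrow> real" where
  "walsh S U = (-1) ^ card (S \<inter> U)"

lemma walsh_commute: "walsh S U = walsh U S"
  by (simp add: walsh_def Int_commute)

lemma walsh_mult_self: "walsh S U * walsh S U = 1"
  by (simp add: walsh_def flip: power_add)

lemma walsh_toggle:
  assumes "finite U"
  shows "walsh (toggle j S) U = (if j \<in> U then - walsh S U else walsh S U)"
proof (cases "j \<in> U")
  case True
  show ?thesis
  proof (cases "j \<in> S")
    case True
    have "S \<inter> U = insert j ((S - {j}) \<inter> U)"
      using True \<open>j \<in> U\<close> by auto
    then have "card (S \<inter> U) = Suc (card ((S - {j}) \<inter> U))"
      using assms by (simp add: card_insert_if)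
    then show ?thesis
      using True \<open>j \<in> U\<close> by (simp add: walsh_def toggle_def)
  next
    case False
    have "insert j S \<inter> U = insert j (S \<inter> U)"
      using \<open>j \<in> U\<close> by auto
    then show ?thesis
      using False \<open>j \<in> U\<close> assms by (simp add: walsh_def toggle_def card_insert_if)
  qed
next
  case False
  then have "toggle j S \<inter> U = S \<inter> U"
    by (auto simp: toggle_def)
  then show ?thesis
    using False by (simp add: walsh_def)
qed

lemma sum_walsh_mult_walsh:
  assumes "finite N" "U \<subseteq> N" "W \<subseteq> N"
  shows "(\<Sum>S\<in>Pow N. walsh S U * walsh S W) = (if U = W then 2 ^ card N else 0)"
proof (cases "U = W")
  case True
  then show ?thesis
    using assms by (simp add: walsh_mult_self card_Pow)
next
  case False
  then obtain j where j: "j \<in> N" "(j \<in> U) \<noteq> (j \<in> W)"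
    using assms by blast
  have "finite U" "finite W"
    using assms finite_subset by auto
  then have "(\<Sum>S\<in>Pow N. walsh S U * walsh S W) = 0"
    using j by (intro sum_Pow_eq_0_if_toggle_neg[OF j(1)]) (auto simp: walsh_toggle)
  then show ?thesis
    using False by simp
qed

definition walsh_coeff :: "'a set \<Rightarrow> ('a set \<Rightarrow> real) \<Rightarrow> 'a set \<Rightarrow> real" where
  "walsh_coeff N G S = (\<Sum>U\<in>Pow N. G U * walsh S U)"

lemma parseval_walsh_coeff:
  assumes "finite N"
  shows "(\<Sum>S\<in>Pow N. (walsh_coeff N G S)\<^sup>2) = 2 ^ card N * (\<Sum>U\<in>Pow N. (G U)\<^sup>2)"
proof -
  have "(\<Sum>S\<in>Pow N. (walsh_coeff N G S)\<^sup>2)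
      = (\<Sum>S\<in>Pow N. \<Sum>U\<in>Pow N. \<Sum>W\<in>Pow N. G U * walsh S U * (G W * walsh S W))"
    unfolding walsh_coeff_def power2_eq_square by (intro sum.cong refl) (rule sum_product)
  also have "\<dots> = (\<Sum>U\<in>Pow N. \<Sum>W\<in>Pow N. \<Sum>S\<in>Pow N. G U * walsh S U * (G W * walsh S W))"
    by (subst sum.swap) (intro sum.cong refl sum.swap)
  also have "\<dots> = (\<Sum>U\<in>Pow N. \<Sum>W\<in>Pow N. G U * G W * (\<Sum>S\<in>Pow N. walsh S U * walsh S W))"
    by (intro sum.cong refl) (simp add: sum_distrib_left mult_ac)
  also have "\<dots> = (\<Sum>U\<in>Pow N. \<Sum>W\<in>Pow N. if U = W then G U * G W * 2 ^ card N else 0)"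
    using assms by (intro sum.cong refl) (simp add: sum_walsh_mult_walsh)
  also have "\<dots> = 2 ^ card N * (\<Sum>U\<in>Pow N. (G U)\<^sup>2)"
    using assms by (simp add: sum_distrib_left power2_eq_square mult_ac)
  finally show ?thesis .
qed

lemma walsh_coeff_derivative:
  assumes "finite N" "i \<in> N" "S \<subseteq> N"
  shows "walsh_coeff N (\<lambda>U. G (insert i U) - G (U - {i})) S
           = (if i \<in> S then 0 else -2 * walsh_coeff N G (insert i S))"
proof (cases "i \<in> S")
  case True
  have "finite S"
    using assms finite_subset by auto
  have "(\<Sum>U\<in>Pow N. (G (insert i U) - G (U - {i})) * walsh S U) = 0"
  proof (rule sum_Pow_eq_0_if_toggle_neg[OF assms(2)])
    fix U
    have "insert i (toggle i U) = insert i U" "toggle i U - {i} = U - {i}"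
      by (auto simp: toggle_def)
    moreover have "walsh S (toggle i U) = - walsh S U"
      using walsh_toggle[OF \<open>finite S\<close>, of i U] True by (simp add: walsh_commute)
    ultimately show "(G (insert i (toggle i U)) - G (toggle i U - {i})) * walsh S (toggle i U)
                       = - ((G (insert i U) - G (U - {i})) * walsh S U)"
      by simp
  qed
  then show ?thesis
    using True by (simp add: walsh_coeff_def)
next
  case False
  define h where "h W = G W * walsh (insert i S) W" for W
  have "(\<Sum>U\<in>Pow N. (G (insert i U) - G (U - {i})) * walsh S U)
      = (\<Sum>U\<in>Pow N. - (h U + h (toggle i U)))"
  proof (intro sum.cong refl)
    fix U assume "U \<in> Pow N"
    then have "finite U"
      using assms finite_subset by auto
    have "S \<inter> insert i U = S \<inter> U" "S \<inter> (U - {i}) = S \<inter> U"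
      using False by auto
    then have "walsh S (insert i U) = walsh S U" "walsh S (U - {i}) = walsh S U"
      by (simp_all add: walsh_def)
    moreover have "walsh (insert i S) (insert i U) = - walsh S (insert i U)"
      "walsh (insert i S) (U - {i}) = walsh S (U - {i})"
      using walsh_toggle[of "insert i U" i S] walsh_toggle[of "U - {i}" i S] \<open>finite U\<close> False
      by (simp_all add: toggle_def)
    moreover have "h (insert i U) + h (U - {i}) = h U + h (toggle i U)"
      by (cases "i \<in> U") (auto simp: toggle_def insert_absorb)
    ultimately show "(G (insert i U) - G (U - {i})) * walsh S U = - (h U + h (toggle i U))"
      by (simp add: h_def algebra_simps)
  qed
  also have "\<dots> = - (\<Sum>U\<in>Pow N. h U) - (\<Sum>U\<in>Pow N. h (toggle i U))"
    by (simp add: sum_negf sum_subtractf)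
  also have "\<dots> = -2 * (\<Sum>U\<in>Pow N. h U)"
    by (simp add: sum_Pow_toggle[OF assms(2)])
  finally show ?thesis
    using False by (simp add: walsh_coeff_def h_def)
qed

section \<open>Degree and total influence\<close>

definition cube_degree_le :: "'a set \<Rightarrow> nat \<Rightarrow> ('a set \<Rightarrow> real) \<Rightarrow> bool" where
  "cube_degree_le N D G \<longleftrightarrow> (\<exists>p. (\<forall>R. p R \<noteq> 0 \<longrightarrow> card R \<le> D) \<and>
      (\<forall>U\<subseteq>N. G U = (\<Sum>R\<in>Pow N. p R * of_bool (R \<subseteq> U))))"

lemma cube_degree_le_cong:
  "cube_degree_le N D G \<Longrightarrow> (\<And>U. U \<subseteq> N \<Longrightarrow> G U = H U) \<Longrightarrow> cube_degree_le N D H"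
  unfolding cube_degree_le_def by auto

lemma cube_degree_le_mono: "cube_degree_le N D G \<Longrightarrow> D \<le> D' \<Longrightarrow> cube_degree_le N D' G"
  unfolding cube_degree_le_def by (meson order_trans)

lemma cube_degree_le_monomial:
  assumes "finite N" "R \<subseteq> N" "card R \<le> D"
  shows "cube_degree_le N D (\<lambda>U. a * of_bool (R \<subseteq> U))"
proof -
  have "(\<Sum>R'\<in>Pow N. (if R' = R then a else 0) * of_bool (R' \<subseteq> U)) = a * of_bool (R \<subseteq> U)" for U
    using assms(1,2) by (simp add: if_distrib[of "\<lambda>x. x * _"] sum.delta' cong: if_cong)
  then show ?thesis
    unfolding cube_degree_le_def using assms(3)
    by (intro exI[of _ "\<lambda>R'. if R' = R then a else 0"]) auto
qed

lemma cube_degree_le_zero: "cube_degree_le N D (\<lambda>U. 0)"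
  unfolding cube_degree_le_def by (intro exI[of _ "\<lambda>R. 0"]) simp

lemma cube_degree_le_const: "finite N \<Longrightarrow> cube_degree_le N D (\<lambda>U. a)"
  using cube_degree_le_monomial[of N "{}" D a] by simp

lemma cube_degree_le_add:
  assumes "cube_degree_le N D G" "cube_degree_le N D H"
  shows "cube_degree_le N D (\<lambda>U. G U + H U)"
proof -
  obtain p where p: "\<And>R. p R \<noteq> 0 \<Longrightarrow> card R \<le> D"
    and G: "\<And>U. U \<subseteq> N \<Longrightarrow> G U = (\<Sum>R\<in>Pow N. p R * of_bool (R \<subseteq> U))"
    using assms(1) unfolding cube_degree_le_def by blast
  obtain q where q: "\<And>R. q R \<noteq> 0 \<Longrightarrow> card R \<le> D"
    and H: "\<And>U. U \<subseteq> N \<Longrightarrow> H U = (\<Sum>R\<in>Pow N. q R * of_bool (R \<subseteq> U))"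
    using assms(2) unfolding cube_degree_le_def by blast
  have "p R + q R \<noteq> 0 \<Longrightarrow> card R \<le> D" for R
    using p q by (metis add.right_neutral)
  then show ?thesis
    unfolding cube_degree_le_def using G H
    by (intro exI[of _ "\<lambda>R. p R + q R"]) (simp add: distrib_right sum.distrib)
qed

lemma cube_degree_le_scale:
  assumes "cube_degree_le N D G"
  shows "cube_degree_le N D (\<lambda>U. a * G U)"
proof -
  obtain p where p: "\<And>R. p R \<noteq> 0 \<Longrightarrow> card R \<le> D"
    and G: "\<And>U. U \<subseteq> N \<Longrightarrow> G U = (\<Sum>R\<in>Pow N. p R * of_bool (R \<subseteq> U))"
    using assms unfolding cube_degree_le_def by blast
  show ?thesis
    unfolding cube_degree_le_def using p G
    by (intro exI[of _ "\<lambda>R. a * p R"]) (simp add: sum_distrib_left mult_ac)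
qed

lemma cube_degree_le_sum:
  assumes "finite I" "\<And>j. j \<in> I \<Longrightarrow> cube_degree_le N D (h j)"
  shows "cube_degree_le N D (\<lambda>U. \<Sum>j\<in>I. h j U)"
  using assms
  by (induction I rule: finite_induct) (simp_all add: cube_degree_le_zero cube_degree_le_add)

lemma cube_degree_le_mult:
  assumes "finite N" "cube_degree_le N D G" "cube_degree_le N E H"
  shows "cube_degree_le N (D + E) (\<lambda>U. G U * H U)"
proof -
  obtain p where p: "\<And>R. p R \<noteq> 0 \<Longrightarrow> card R \<le> D"
    and G: "\<And>U. U \<subseteq> N \<Longrightarrow> G U = (\<Sum>R\<in>Pow N. p R * of_bool (R \<subseteq> U))"
    using assms(2) unfolding cube_degree_le_def by blast
  obtain q where q: "\<And>R. q R \<noteq> 0 \<Longrightarrow> card R \<le> E"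
    and H: "\<And>U. U \<subseteq> N \<Longrightarrow> H U = (\<Sum>R\<in>Pow N. q R * of_bool (R \<subseteq> U))"
    using assms(3) unfolding cube_degree_le_def by blast
  have "cube_degree_le N (D + E)
          (\<lambda>U. \<Sum>R\<in>Pow N. \<Sum>R'\<in>Pow N. p R * q R' * of_bool (R \<union> R' \<subseteq> U))"
  proof (intro cube_degree_le_sum finite_Pow_iff[THEN iffD2] assms(1))
    fix R R' assume "R \<in> Pow N" "R' \<in> Pow N"
    show "cube_degree_le N (D + E) (\<lambda>U. p R * q R' * of_bool (R \<union> R' \<subseteq> U))"
    proof (cases "p R * q R' = 0")
      case True
      then show ?thesis
        by (simp only: mult_zero_left cube_degree_le_zero)
    next
      case False
      then have "card (R \<union> R') \<le> D + E"
        using p q card_Un_le[of R R'] by fastforce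
      then show ?thesis
        using \<open>R \<in> Pow N\<close> \<open>R' \<in> Pow N\<close> assms(1) by (intro cube_degree_le_monomial) auto
    qed
  qed
  then show ?thesis
  proof (rule cube_degree_le_cong)
    fix U assume "U \<subseteq> N"
    then show "(\<Sum>R\<in>Pow N. \<Sum>R'\<in>Pow N. p R * q R' * of_bool (R \<union> R' \<subseteq> U)) = G U * H U"
      by (simp add: G H sum_product) (intro sum.cong refl, simp)
  qed
qed

lemma cube_degree_le_prod:
  assumes "finite N" "finite W" "\<And>w. w \<in> W \<Longrightarrow> cube_degree_le N D (h w)"
  shows "cube_degree_le N (D * card W) (\<lambda>U. \<Prod>w\<in>W. h w U)"
  using assms(2,3)
proof (induction W rule: finite_induct)
  case empty
  then show ?case
    by (simp add: cube_degree_le_const assms(1))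
next
  case (insert x F)
  have "cube_degree_le N (D + D * card F) (\<lambda>U. h x U * (\<Prod>w\<in>F. h w U))"
    using insert by (intro cube_degree_le_mult assms(1)) auto
  then show ?case
    using insert by simp
qed

lemma walsh_coeff_eq_0_if_degree_less:
  assumes "finite N" "cube_degree_le N D G" "S \<subseteq> N" "D < card S"
  shows "walsh_coeff N G S = 0"
proof -
  obtain p where p: "\<And>R. p R \<noteq> 0 \<Longrightarrow> card R \<le> D"
    and G: "\<And>U. U \<subseteq> N \<Longrightarrow> G U = (\<Sum>R\<in>Pow N. p R * of_bool (R \<subseteq> U))"
    using assms(2) unfolding cube_degree_le_def by blast
  have "finite S"
    using assms finite_subset by auto
  have monomial_orth: "(\<Sum>U\<in>Pow N. of_bool (R \<subseteq> U) * walsh S U) = 0" if "R \<subseteq> N" "p R \<noteq> 0" for R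
  proof -
    have "finite R"
      using \<open>R \<subseteq> N\<close> assms(1) finite_subset by blast
    moreover have "card R < card S"
      using p[OF \<open>p R \<noteq> 0\<close>] assms(4) by linarith
    ultimately have "\<not> S \<subseteq> R"
      using card_mono[of R S] by linarith
    then obtain j where j: "j \<in> S" "j \<notin> R"
      by blast
    show ?thesis
    proof (rule sum_Pow_eq_0_if_toggle_neg)
      show "j \<in> N"
        using j assms(3) by auto
      fix U
      have "(R \<subseteq> toggle j U) = (R \<subseteq> U)"
        using j by (auto simp: toggle_def)
      moreover have "walsh S (toggle j U) = - walsh S U"
        using walsh_toggle[OF \<open>finite S\<close>, of j U] j by (simp add: walsh_commute)
      ultimately show "of_bool (R \<subseteq> toggle j U) * walsh S (toggle j U) = - (of_bool (R \<subseteq> U) * walsh S U)"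
        by simp
    qed
  qed
  have "walsh_coeff N G S = (\<Sum>U\<in>Pow N. \<Sum>R\<in>Pow N. p R * (of_bool (R \<subseteq> U) * walsh S U))"
    unfolding walsh_coeff_def by (intro sum.cong refl) (simp add: G sum_distrib_left sum_distrib_right mult_ac)
  also have "\<dots> = (\<Sum>R\<in>Pow N. p R * (\<Sum>U\<in>Pow N. of_bool (R \<subseteq> U) * walsh S U))"
    by (subst sum.swap) (simp add: sum_distrib_left)
  also have "\<dots> = 0"
    using monomial_orth by (intro sum.neutral) auto
  finally show ?thesis .
qed

lemma sum_derivative_squared:
  assumes "finite N" "i \<in> N"
  shows "(\<Sum>U\<in>Pow N. (G (insert i U) - G (U - {i}))\<^sup>2)
           = 4 * (\<Sum>S\<in>Pow N. if i \<in> S then (walsh_coeff N G S)\<^sup>2 else 0) / 2 ^ card N"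
proof -
  let ?H = "\<lambda>U. G (insert i U) - G (U - {i})"
  let ?e = "\<lambda>S. if i \<in> S then (walsh_coeff N G S)\<^sup>2 else 0"
  have "(\<Sum>U\<in>Pow N. (?H U)\<^sup>2) = (\<Sum>S\<in>Pow N. (walsh_coeff N ?H S)\<^sup>2) / 2 ^ card N"
    using parseval_walsh_coeff[OF assms(1), of ?H] by simp
  also have "(\<Sum>S\<in>Pow N. (walsh_coeff N ?H S)\<^sup>2) = 4 * (\<Sum>S\<in>Pow N. ?e (toggle i S))"
    using assms unfolding sum_distrib_left
    by (intro sum.cong refl) (auto simp: walsh_coeff_derivative toggle_def power2_eq_square)
  also have "\<dots> = 4 * (\<Sum>S\<in>Pow N. ?e S)"
    by (simp only: sum_Pow_toggle[OF assms(2), of ?e])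
  finally show ?thesis .
qed

lemma total_influence_le:
  assumes "finite N" "cube_degree_le N D G"
  shows "(\<Sum>i\<in>N. \<Sum>U\<in>Pow N. (G (insert i U) - G (U - {i}))\<^sup>2) \<le> 4 * D * (\<Sum>U\<in>Pow N. (G U)\<^sup>2)"
proof -
  let ?w = "\<lambda>S. (walsh_coeff N G S)\<^sup>2"
  have "(\<Sum>i\<in>N. \<Sum>S\<in>Pow N. if i \<in> S then ?w S else 0) = (\<Sum>S\<in>Pow N. \<Sum>i\<in>N. if i \<in> S then ?w S else 0)"
    by (rule sum.swap)
  also have "\<dots> = (\<Sum>S\<in>Pow N. real (card S) * ?w S)"
    using assms(1) by (intro sum.cong refl) (simp add: sum.If_cases Int_absorb1)
  also have "\<dots> \<le> (\<Sum>S\<in>Pow N. real D * ?w S)"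
  proof (rule sum_mono)
    fix S assume "S \<in> Pow N"
    then show "real (card S) * ?w S \<le> real D * ?w S"
      using walsh_coeff_eq_0_if_degree_less[OF assms] by (cases "D < card S") (auto intro: mult_right_mono)
  qed
  also have "\<dots> = real D * 2 ^ card N * (\<Sum>U\<in>Pow N. (G U)\<^sup>2)"
    by (simp add: parseval_walsh_coeff[OF assms(1)] flip: sum_distrib_left)
  finally have weighted_bound:
    "(\<Sum>i\<in>N. \<Sum>S\<in>Pow N. if i \<in> S then ?w S else 0) \<le> real D * 2 ^ card N * (\<Sum>U\<in>Pow N. (G U)\<^sup>2)" .
  have "(\<Sum>i\<in>N. \<Sum>U\<in>Pow N. (G (insert i U) - G (U - {i}))\<^sup>2)
      = 4 * (\<Sum>i\<in>N. \<Sum>S\<in>Pow N. if i \<in> S then ?w S else 0) / 2 ^ card N"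
    using assms(1) by (simp add: sum_derivative_squared sum_divide_distrib sum_distrib_left)
  also have "\<dots> \<le> 4 * (real D * 2 ^ card N * (\<Sum>U\<in>Pow N. (G U)\<^sup>2)) / 2 ^ card N"
    using weighted_bound by (intro divide_right_mono mult_left_mono) auto
  also have "\<dots> = 4 * D * (\<Sum>U\<in>Pow N. (G U)\<^sup>2)"
    by simp
  finally show ?thesis .
qed

text \<open>Lagrange interpolation: the indicator of a level set of \<open>G\<close> is a polynomial in \<open>G\<close>.\<close>

lemma cube_degree_le_level_indicator:
  assumes "finite N" "cube_degree_le N d G" "finite vals" "G ` Pow N \<subseteq> vals" "v \<in> vals"
  shows "cube_degree_le N (d * (card vals - 1)) (\<lambda>U. of_bool (G U = v))"
proof -
  have "cube_degree_le N (d * card (vals - {v})) (\<lambda>U. \<Prod>w\<in>vals - {v}. (G U - w) / (v - w))"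
  proof (intro cube_degree_le_prod assms(1) finite_Diff assms(3))
    fix w
    have "cube_degree_le N d (\<lambda>U. 1 / (v - w) * G U + - w / (v - w))"
      by (intro cube_degree_le_add cube_degree_le_scale cube_degree_le_const assms(1,2))
    then show "cube_degree_le N d (\<lambda>U. (G U - w) / (v - w))"
      by (rule cube_degree_le_cong) (simp add: diff_divide_distrib)
  qed
  then have "cube_degree_le N (d * (card vals - 1)) (\<lambda>U. \<Prod>w\<in>vals - {v}. (G U - w) / (v - w))"
    using assms(3,5) by simp
  then show ?thesis
  proof (rule cube_degree_le_cong)
    fix U assume "U \<subseteq> N"
    then have "G U \<in> vals"
      using assms(4) by blast
    then show "(\<Prod>w\<in>vals - {v}. (G U - w) / (v - w)) = of_bool (G U = v)"
      using assms(3) by (cases "G U = v") (auto intro: prod_zero)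
  qed
qed

lemma card_sensitive_le_sum_level_indicators:
  assumes "finite N" "i \<in> N" "finite vals" "G ` Pow N \<subseteq> vals"
  shows "real (card {U\<in>Pow N. G (insert i U) \<noteq> G (U - {i})})
           \<le> (\<Sum>U\<in>Pow N. \<Sum>v\<in>vals. (of_bool (G (insert i U) = v) - of_bool (G (U - {i}) = v))\<^sup>2)"
proof -
  have "real (card {U\<in>Pow N. G (insert i U) \<noteq> G (U - {i})})
      = (\<Sum>U\<in>Pow N. of_bool (G (insert i U) \<noteq> G (U - {i})))"
    using assms(1) by (simp add: sum.inter_filter[symmetric] of_bool_def)
  also have "\<dots> \<le> (\<Sum>U\<in>Pow N. \<Sum>v\<in>vals. (of_bool (G (insert i U) = v) - of_bool (G (U - {i}) = v))\<^sup>2)"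
  proof (rule sum_mono)
    fix U assume "U \<in> Pow N"
    then have "G (insert i U) \<in> vals"
      using assms(2,4) by (simp add: image_subset_iff)
    then have "(of_bool (G (insert i U) = G (insert i U)) - of_bool (G (U - {i}) = G (insert i U)))\<^sup>2
               \<le> (\<Sum>v\<in>vals. (of_bool (G (insert i U) = v) - of_bool (G (U - {i}) = v) :: real)\<^sup>2)"
      using assms(3) by (intro member_le_sum) auto
    then show "of_bool (G (insert i U) \<noteq> G (U - {i}))
               \<le> (\<Sum>v\<in>vals. (of_bool (G (insert i U) = v) - of_bool (G (U - {i}) = v) :: real)\<^sup>2)"
      by (cases "G (insert i U) = G (U - {i})") (simp_all add: sum_nonneg)
  qed
  finally show ?thesis .
qed

text \<open>
  The level indicators of \<open>G\<close> have degree \<open>d (k - 1)\<close> and squared norms summing to \<open>2\<^sup>n\<close>,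
  so their total influence is at most \<open>4 d (k - 1) 2\<^sup>n\<close>; each change of \<open>G\<close> in direction \<open>i\<close>
  contributes at least \<open>1\<close> to it.
\<close>

lemma card_sensitive_coords_le:
  assumes "finite N" "cube_degree_le N d G" "V \<subseteq> N"
    and sensitive: "\<And>i. i \<in> V \<Longrightarrow> 2 ^ (card N - e) \<le> card {U\<in>Pow N. G (insert i U) \<noteq> G (U - {i})}"
  shows "card V \<le> 4 * (d * (card (G ` Pow N) - 1)) * 2 ^ e"
proof -
  define vals where "vals = G ` Pow N"
  define D where "D = d * (card vals - 1)"
  define g where "g v U = (of_bool (G U = v) :: real)" for v U
  have "finite vals"
    using assms(1) by (simp add: vals_def)
  have level_sets_partition: "(\<Sum>v\<in>vals. (g v U)\<^sup>2) = 1" if "U \<in> Pow N" for U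
  proof -
    have "G U \<in> vals"
      using that by (simp add: vals_def)
    have "(\<Sum>v\<in>vals. (g v U)\<^sup>2) = (\<Sum>v\<in>vals. if v = G U then 1 else 0)"
      by (intro sum.cong) (auto simp: g_def)
    then show ?thesis
      using \<open>G U \<in> vals\<close> \<open>finite vals\<close> by simp
  qed
  have "real (card V) * 2 ^ (card N - e) = (\<Sum>i\<in>V. real (2 ^ (card N - e)))"
    by simp
  also have "\<dots> \<le> (\<Sum>i\<in>V. real (card {U\<in>Pow N. G (insert i U) \<noteq> G (U - {i})}))"
    using sensitive by (intro sum_mono) (simp only: of_nat_le_iff)
  also have "\<dots> \<le> (\<Sum>i\<in>N. real (card {U\<in>Pow N. G (insert i U) \<noteq> G (U - {i})}))"
    using assms(1,3) by (intro sum_mono2) auto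
  also have "\<dots> \<le> (\<Sum>i\<in>N. \<Sum>U\<in>Pow N. \<Sum>v\<in>vals. (g v (insert i U) - g v (U - {i}))\<^sup>2)"
    unfolding g_def vals_def
    using assms(1) by (intro sum_mono card_sensitive_le_sum_level_indicators) auto
  also have "\<dots> = (\<Sum>v\<in>vals. \<Sum>i\<in>N. \<Sum>U\<in>Pow N. (g v (insert i U) - g v (U - {i}))\<^sup>2)"
    by (simp add: sum.swap[of _ vals])
  also have "\<dots> \<le> (\<Sum>v\<in>vals. 4 * D * (\<Sum>U\<in>Pow N. (g v U)\<^sup>2))"
    unfolding g_def D_def vals_def
    using assms(1) by (intro sum_mono total_influence_le cube_degree_le_level_indicator assms(2)) auto
  also have "\<dots> = 4 * D * (\<Sum>U\<in>Pow N. \<Sum>v\<in>vals. (g v U)\<^sup>2)"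
    by (simp add: sum.swap[of _ vals] flip: sum_distrib_left)
  also have "\<dots> = 4 * D * 2 ^ card N"
    using assms(1) by (simp add: level_sets_partition card_Pow)
  also have "\<dots> \<le> 4 * D * 2 ^ e * 2 ^ (card N - e)"
    by (simp add: mult.assoc flip: power_add) (intro mult_left_mono power_increasing, auto)
  finally have "real (card V) \<le> real (4 * D * 2 ^ e)"
    by simp
  then show ?thesis
    by (simp only: of_nat_le_iff D_def vals_def)
qed

section \<open>Restriction to two-point inputs\<close>

definition two_point_eval :: "'a set \<Rightarrow> ('a set \<Rightarrow> real) \<Rightarrow> real \<Rightarrow> real \<Rightarrow> 'a set \<Rightarrow> real" where
  "two_point_eval N c a b U = (\<Sum>S\<in>Pow N. c S * (\<Prod>j\<in>S. if j \<in> U then b else a))"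

lemma cube_degree_le_two_point_eval:
  assumes "finite N" "\<And>S. c S \<noteq> 0 \<Longrightarrow> card S \<le> d"
  shows "cube_degree_le N d (two_point_eval N c a b)"
  unfolding two_point_eval_def
proof (intro cube_degree_le_sum finite_Pow_iff[THEN iffD2] assms(1))
  fix S assume "S \<in> Pow N"
  show "cube_degree_le N d (\<lambda>U. c S * (\<Prod>j\<in>S. if j \<in> U then b else a))"
  proof (cases "c S = 0")
    case True
    then show ?thesis
      by (simp add: cube_degree_le_zero)
  next
    case False
    have "finite S"
      using \<open>S \<in> Pow N\<close> assms(1) finite_subset by auto
    have "cube_degree_le N (1 * card S) (\<lambda>U. \<Prod>j\<in>S. if j \<in> U then b else a)"
    proof (intro cube_degree_le_prod assms(1) \<open>finite S\<close>)
      fix j assume "j \<in> S"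
      have "cube_degree_le N 1 (\<lambda>U. a + (b - a) * of_bool ({j} \<subseteq> U))"
        using \<open>j \<in> S\<close> \<open>S \<in> Pow N\<close> assms(1)
        by (intro cube_degree_le_add cube_degree_le_const cube_degree_le_monomial) auto
      then show "cube_degree_le N 1 (\<lambda>U. if j \<in> U then b else a)"
        by (rule cube_degree_le_cong) auto
    qed
    then show ?thesis
      using assms(2)[OF False] by (intro cube_degree_le_scale) (auto intro: cube_degree_le_mono)
  qed
qed

lemma prod_if_mem_else_zero:
  fixes x :: "'b::comm_semiring_1"
  assumes "finite A"
  shows "(\<Prod>j\<in>A. if j \<in> S then x else 0) = (if A \<subseteq> S then x ^ card A else 0)"
proof (cases "A \<subseteq> S")
  case False
  then obtain j where "j \<in> A" "j \<notin> S"
    by blast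
  then show ?thesis
    using False assms by (intro trans[OF prod_zero]) auto
qed (auto simp: subset_iff)

lemma alternating_sum_prod_two_point:
  fixes a b :: real
  assumes "finite S0" "finite S" "Z \<inter> S0 = {}"
  shows "(\<Sum>Y\<in>Pow S0. (-1) ^ card (S0 - Y) * (\<Prod>j\<in>S. if j \<in> Y \<union> Z then b else a))
           = (if S0 \<subseteq> S then (b - a) ^ card S0 * (\<Prod>j\<in>S - S0. if j \<in> Z then b else a) else 0)"
proof -
  define f where "f x j = (if j \<in> S then x else 1)" for x :: real and j
  define C where "C = (\<Prod>j\<in>S - S0. if j \<in> Z then b else a)"
  have split: "(\<Prod>j\<in>S. if j \<in> Y \<union> Z then b else a) = (\<Prod>j\<in>Y. f b j) * (\<Prod>j\<in>S0 - Y. f a j) * C"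
    if "Y \<subseteq> S0" for Y
  proof -
    have "(\<Prod>j\<in>S. if j \<in> Y \<union> Z then b else a)
        = (\<Prod>j\<in>S \<inter> S0. if j \<in> Y then b else a) * C"
      unfolding C_def prod.Int_Diff[OF assms(2), of _ S0]
      using assms(3) that by (intro arg_cong2[where f = "(*)"] prod.cong) auto
    also have "(\<Prod>j\<in>S \<inter> S0. if j \<in> Y then b else a) = (\<Prod>j\<in>S0. if j \<in> Y then f b j else f a j)"
      unfolding Int_commute[of S] prod.inter_restrict[OF assms(1)]
      by (intro prod.cong) (auto simp: f_def)
    also have "\<dots> = (\<Prod>j\<in>Y. f b j) * (\<Prod>j\<in>S0 - Y. f a j)"
      using assms(1) that by (simp add: prod.If_cases Int_absorb1 Diff_eq)
    finally show ?thesis .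
  qed
  have "(\<Sum>Y\<in>Pow S0. (-1) ^ card (S0 - Y) * (\<Prod>j\<in>S. if j \<in> Y \<union> Z then b else a))
      = (\<Sum>Y\<in>Pow S0. (-1) ^ (card S0 - card Y) * (\<Prod>j\<in>Y. f b j) * (\<Prod>j\<in>S0 - Y. f a j) * C)"
  proof (intro sum.cong refl)
    fix Y assume "Y \<in> Pow S0"
    then show "(-1) ^ card (S0 - Y) * (\<Prod>j\<in>S. if j \<in> Y \<union> Z then b else a)
                 = (-1) ^ (card S0 - card Y) * (\<Prod>j\<in>Y. f b j) * (\<Prod>j\<in>S0 - Y. f a j) * C"
      using split[of Y] assms(1) by (simp add: card_Diff_subset finite_subset mult_ac)
  qed
  also have "\<dots> = (\<Sum>Y\<in>Pow S0. (-1) ^ (card S0 - card Y) * (\<Prod>j\<in>Y. f b j) * (\<Prod>j\<in>S0 - Y. f a j)) * C"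
    by (simp add: sum_distrib_right)
  also have "\<dots> = (\<Prod>j\<in>S0. f b j - f a j) * C"
    by (simp add: prod_diff_conv_sum'[OF assms(1)])
  also have "(\<Prod>j\<in>S0. f b j - f a j) = (\<Prod>j\<in>S0. if j \<in> S then b - a else 0)"
    by (intro prod.cong) (auto simp: f_def)
  finally show ?thesis
    by (simp add: prod_if_mem_else_zero[OF assms(1)] C_def)
qed

lemma alternating_sum_two_point_eval:
  fixes a b :: real
  assumes "finite N" "S0 \<subseteq> N" "Z \<inter> S0 = {}"
    and maximal: "\<And>S. c S \<noteq> 0 \<Longrightarrow> S0 \<subseteq> S \<Longrightarrow> S \<subseteq> N \<Longrightarrow> S = S0"
  shows "(\<Sum>Y\<in>Pow S0. (-1) ^ card (S0 - Y) * two_point_eval N c a b (Y \<union> Z)) = c S0 * (b - a) ^ card S0"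
proof -
  have "finite S0"
    using assms(1,2) finite_subset by blast
  have "(\<Sum>Y\<in>Pow S0. (-1) ^ card (S0 - Y) * two_point_eval N c a b (Y \<union> Z))
      = (\<Sum>S\<in>Pow N. c S * (\<Sum>Y\<in>Pow S0. (-1) ^ card (S0 - Y) * (\<Prod>j\<in>S. if j \<in> Y \<union> Z then b else a)))"
    unfolding two_point_eval_def sum_distrib_left
    by (subst sum.swap) (simp add: mult_ac)
  also have "\<dots> = (\<Sum>S\<in>Pow N. if S = S0 then c S0 * (b - a) ^ card S0 else 0)"
  proof (intro sum.cong refl)
    fix S assume "S \<in> Pow N"
    then have "finite S"
      using assms(1) finite_subset by blast
    then show "c S * (\<Sum>Y\<in>Pow S0. (-1) ^ card (S0 - Y) * (\<Prod>j\<in>S. if j \<in> Y \<union> Z then b else a))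
                 = (if S = S0 then c S0 * (b - a) ^ card S0 else 0)"
      using \<open>S \<in> Pow N\<close> maximal[of S] alternating_sum_prod_two_point[OF \<open>finite S0\<close> \<open>finite S\<close> assms(3)]
      by auto
  qed
  also have "\<dots> = c S0 * (b - a) ^ card S0"
    using assms(1,2) by simp
  finally show ?thesis .
qed

lemma minus_one_power_card_diff_toggle:
  assumes "finite S0" "i \<in> S0" "Y \<subseteq> S0"
  shows "(-1::real) ^ card (S0 - toggle i Y) = - ((-1) ^ card (S0 - Y))"
proof (cases "i \<in> Y")
  case True
  then have "S0 - toggle i Y = insert i (S0 - Y)" "i \<notin> S0 - Y"
    using assms by (auto simp: toggle_def)
  then show ?thesis
    using assms by simp
next
  case False
  then have "S0 - Y = insert i (S0 - toggle i Y)" "i \<notin> S0 - toggle i Y"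
    using assms by (auto simp: toggle_def)
  then show ?thesis
    using assms by simp
qed

text \<open>Toggling \<open>i\<close> pairs the terms of the alternating sum with opposite signs.\<close>

lemma sensitive_in_subcube_if_alternating_sum_nonzero:
  fixes F :: "'a set \<Rightarrow> real"
  assumes "finite S0" "i \<in> S0" "i \<notin> Z"
    and "(\<Sum>Y\<in>Pow S0. (-1) ^ card (S0 - Y) * F (Y \<union> Z)) \<noteq> 0"
  shows "\<exists>Y\<subseteq>S0. F (insert i (Y \<union> Z)) \<noteq> F (Y \<union> Z - {i})"
proof (rule ccontr)
  assume "\<not> ?thesis"
  then have insensitive: "F (insert i (Y \<union> Z)) = F (Y \<union> Z - {i})" if "Y \<subseteq> S0" for Y
    using that by blast
  have "(\<Sum>Y\<in>Pow S0. (-1) ^ card (S0 - Y) * F (Y \<union> Z)) = 0"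
  proof (rule sum_Pow_eq_0_if_toggle_neg[OF assms(2)])
    fix Y assume "Y \<subseteq> S0"
    have "F (toggle i Y \<union> Z) = F (Y \<union> Z)"
      using insensitive[OF \<open>Y \<subseteq> S0\<close>] assms(3)
      by (cases "i \<in> Y") (simp_all add: toggle_def insert_absorb Un_Diff insert_Diff_if)
    then show "(-1) ^ card (S0 - toggle i Y) * F (toggle i Y \<union> Z) = - ((-1) ^ card (S0 - Y) * F (Y \<union> Z))"
      using minus_one_power_card_diff_toggle[OF assms(1,2) \<open>Y \<subseteq> S0\<close>] by simp
  qed
  with assms(4) show False
    by contradiction
qed

lemma card_Pow_filter_ge_if_meets_subcubes:
  assumes "finite N" "S0 \<subseteq> N"
    and meets: "\<And>Z. Z \<subseteq> N - S0 \<Longrightarrow> \<exists>Y\<subseteq>S0. P (Y \<union> Z)"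
  shows "2 ^ (card N - card S0) \<le> card {U\<in>Pow N. P U}"
proof -
  obtain sel where sel: "\<And>Z. Z \<in> Pow (N - S0) \<Longrightarrow> sel Z \<subseteq> S0 \<and> P (sel Z \<union> Z)"
    using bchoice[of "Pow (N - S0)" "\<lambda>Z Y. Y \<subseteq> S0 \<and> P (Y \<union> Z)"] meets by blast
  have recover: "(sel Z \<union> Z) - S0 = Z" if "Z \<in> Pow (N - S0)" for Z
    using sel[OF that] that by auto
  have "inj_on (\<lambda>Z. sel Z \<union> Z) (Pow (N - S0))"
  proof (rule inj_onI)
    fix Z Z' assume "Z \<in> Pow (N - S0)" "Z' \<in> Pow (N - S0)" "sel Z \<union> Z = sel Z' \<union> Z'"
    then show "Z = Z'"
      using recover by metis
  qed
  moreover have "(\<lambda>Z. sel Z \<union> Z) ` Pow (N - S0) \<subseteq> {U\<in>Pow N. P U}"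
    using sel assms(2) by auto
  ultimately have "card (Pow (N - S0)) \<le> card {U\<in>Pow N. P U}"
    using assms(1) by (intro card_inj_on_le) auto
  then show ?thesis
    using finite_subset[OF assms(2,1)] assms(1,2) by (simp add: card_Pow card_Diff_subset)
qed

lemma card_sensitive_two_point_eval_ge:
  fixes a b :: real
  assumes "finite N" "S0 \<subseteq> N" "i \<in> S0" "c S0 \<noteq> 0" "a \<noteq> b"
    and maximal: "\<And>S. c S \<noteq> 0 \<Longrightarrow> S0 \<subseteq> S \<Longrightarrow> S \<subseteq> N \<Longrightarrow> S = S0"
  shows "2 ^ (card N - card S0)
           \<le> card {U\<in>Pow N. two_point_eval N c a b (insert i U) \<noteq> two_point_eval N c a b (U - {i})}"
proof (rule card_Pow_filter_ge_if_meets_subcubes[OF assms(1,2)])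
  fix Z assume "Z \<subseteq> N - S0"
  have "finite S0"
    using assms(1,2) finite_subset by blast
  have "(\<Sum>Y\<in>Pow S0. (-1) ^ card (S0 - Y) * two_point_eval N c a b (Y \<union> Z)) \<noteq> 0"
    using \<open>Z \<subseteq> N - S0\<close> assms(4,5)
    by (subst alternating_sum_two_point_eval[OF assms(1,2) _ maximal]) auto
  then show "\<exists>Y\<subseteq>S0. two_point_eval N c a b (insert i (Y \<union> Z)) \<noteq> two_point_eval N c a b (Y \<union> Z - {i})"
    using \<open>finite S0\<close> assms(3) \<open>Z \<subseteq> N - S0\<close>
    by (intro sensitive_in_subcube_if_alternating_sum_nonzero) auto
qed

lemma card_vars_le_two_point_values:
  fixes a b :: real
  assumes "finite N" "a \<noteq> b" "\<And>S. c S \<noteq> 0 \<Longrightarrow> S \<subseteq> N \<and> card S \<le> d"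
  shows "card (\<Union>{S. c S \<noteq> 0}) \<le> 4 * (d * (card (two_point_eval N c a b ` Pow N) - 1)) * 2 ^ d"
proof (rule card_sensitive_coords_le[OF assms(1) cube_degree_le_two_point_eval[OF assms(1)]])
  show "\<Union>{S. c S \<noteq> 0} \<subseteq> N" "\<And>S. c S \<noteq> 0 \<Longrightarrow> card S \<le> d"
    using assms(3) by auto
  fix i assume "i \<in> \<Union>{S. c S \<noteq> 0}"
  let ?A = "{S. c S \<noteq> 0 \<and> i \<in> S}"
  have "?A \<subseteq> Pow N"
    using assms(3) by blast
  then have "finite ?A"
    using assms(1) by (simp add: finite_subset)
  moreover have "?A \<noteq> {}"
    using \<open>i \<in> \<Union>{S. c S \<noteq> 0}\<close> by auto
  ultimately obtain S0 where S0: "S0 \<in> ?A" and maximal: "\<And>S. S \<in> ?A \<Longrightarrow> S0 \<subseteq> S \<Longrightarrow> S = S0"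
    using finite_has_maximal by (metis (no_types, lifting))
  have "card S0 \<le> d"
    using S0 assms(3) by blast
  then have "2 ^ (card N - d) \<le> (2::nat) ^ (card N - card S0)"
    by (intro power_increasing diff_le_mono2) auto
  also have "\<dots> \<le> card {U\<in>Pow N. two_point_eval N c a b (insert i U) \<noteq> two_point_eval N c a b (U - {i})}"
    using S0 assms(2,3) maximal by (intro card_sensitive_two_point_eval_ge assms(1)) auto
  finally show "2 ^ (card N - d) \<le> \<dots>" .
qed

section \<open>Counting monomials\<close>

lemma card_subsets_card_le:
  assumes "finite V"
  shows "card {S. S \<subseteq> V \<and> card S \<le> d} \<le> (card V + 1) ^ d"
proof -
  have "{S. S \<subseteq> V \<and> card S \<le> d} = (\<Union>k\<le>d. {S. S \<subseteq> V \<and> card S = k})"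
    by auto
  then have "card {S. S \<subseteq> V \<and> card S \<le> d} \<le> (\<Sum>k\<le>d. card {S. S \<subseteq> V \<and> card S = k})"
    by (simp add: card_UN_le)
  also have "\<dots> = (\<Sum>k\<le>d. card V choose k)"
    using n_subsets[OF assms] by simp
  also have "\<dots> \<le> (\<Sum>k\<le>d. (d choose k) * card V ^ k)"
  proof (rule sum_mono)
    fix k assume "k \<in> {..d}"
    then have "1 \<le> d choose k"
      by (simp add: Suc_le_eq zero_less_binomial_iff)
    moreover have "card V choose k \<le> card V ^ k"
      by (cases "k \<le> card V") (simp_all add: binomial_le_pow binomial_eq_0)
    ultimately show "card V choose k \<le> (d choose k) * card V ^ k"
      using le_trans mult_le_mono1 by fastforce
  qed
  also have "\<dots> = (card V + 1) ^ d"
    using binomial_ring[of "card V" 1 d] by simp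
  finally show ?thesis .
qed

lemma sparsity_le_card_vars:
  assumes "is_multilinear_poly n d c"
  shows "sparsity c \<le> (card (\<Union>{S. c S \<noteq> 0}) + 1) ^ d"
proof -
  let ?V = "\<Union>{S. c S \<noteq> 0}"
  have "?V \<subseteq> {..<n}"
    using assms unfolding is_multilinear_poly_def by blast
  then have "finite ?V"
    by (rule finite_subset) simp
  have "sparsity c \<le> card {S. S \<subseteq> ?V \<and> card S \<le> d}"
    unfolding sparsity_def
  proof (rule card_mono)
    show "finite {S. S \<subseteq> ?V \<and> card S \<le> d}"
      using \<open>finite ?V\<close> by simp
    show "{S. c S \<noteq> 0} \<subseteq> {S. S \<subseteq> ?V \<and> card S \<le> d}"
      using assms by (auto simp: is_multilinear_poly_def)
  qed
  also have "\<dots> \<le> (card ?V + 1) ^ d"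
    by (rule card_subsets_card_le[OF \<open>finite ?V\<close>])
  finally show ?thesis .
qed

lemma sparsity_le_two_power:
  fixes T m d k K :: nat
  assumes "1 \<le> d" "1 \<le> k" "k \<le> K" "m \<le> 4 * (d * (k - 1)) * 2 ^ d" "T \<le> (m + 1) ^ d"
  shows "T \<le> 2 ^ (2 * d\<^sup>2 * (K + 3))"
proof -
  have "m + 1 \<le> 4 * d * k * 2 ^ d"
  proof -
    have "1 \<le> 4 * d * 2 ^ d"
      using assms(1) by simp
    then have "m + 1 \<le> 4 * (d * (k - 1)) * 2 ^ d + 4 * d * 2 ^ d"
      using assms(4) by linarith
    also have "\<dots> = 4 * d * k * 2 ^ d"
      using assms(2) by (cases k) (simp_all add: algebra_simps)
    finally show ?thesis .
  qed
  also have "\<dots> \<le> 4 * 2 ^ d * 2 ^ k * 2 ^ d"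
    using less_exp[of d] less_exp[of k] by (simp add: mult_le_mono)
  also have "\<dots> = 2 ^ (d + d + k + 2)"
    by (simp add: power_add mult_ac)
  finally have "T \<le> (2 ^ (d + d + k + 2)) ^ d"
    using assms(5) power_mono[of "m + 1" _ d] by (meson le_trans zero_le)
  also have "\<dots> = 2 ^ ((d + d + k + 2) * d)"
    by (rule power_mult[symmetric])
  also have "\<dots> \<le> 2 ^ (2 * d\<^sup>2 * (K + 3))"
  proof (rule power_increasing)
    have "1 * K \<le> 2 * d * K"
      using assms(1) by (intro mult_le_mono1) simp
    then have "k * d \<le> 2 * d * K * d"
      using assms(3) by (intro mult_le_mono1) linarith
    moreover have "2 * d * K * d = 2 * d\<^sup>2 * K" "(d + d + k + 2) * d = 2 * d\<^sup>2 + k * d + 2 * d"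
      "2 * d\<^sup>2 * (K + 3) = 2 * d\<^sup>2 * K + 6 * d\<^sup>2"
      by (simp_all add: algebra_simps power2_eq_square)
    moreover have "d \<le> d\<^sup>2"
      by (simp add: power2_eq_square)
    ultimately show "(d + d + k + 2) * d \<le> 2 * d\<^sup>2 * (K + 3)"
      by linarith
  qed simp
  finally show ?thesis .
qed

lemma log_sparsity_bound:
  fixes T m d k K :: nat
  assumes "1 \<le> k" "k \<le> K" "m \<le> 4 * (d * (k - 1)) * 2 ^ d" "T \<le> (m + 1) ^ d"
  shows "1 / (2 * real d ^ 2) * log 2 (real T) - 3 \<le> real K"
proof (cases "d = 0 \<or> T = 0")
  case True
  then show ?thesis
    by (auto simp: log_def)
next
  case False
  then have "real T \<le> 2 ^ (2 * d\<^sup>2 * (K + 3))"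
    using sparsity_le_two_power[of d k K m T] assms by (simp flip: of_nat_le_iff)
  then have "log 2 (real T) \<le> log 2 (2 ^ (2 * d\<^sup>2 * (K + 3)))"
    using False by (subst log_le_cancel_iff) auto
  then have "log 2 (real T) \<le> 2 * real d ^ 2 * (real K + 3)"
    by (simp add: log_nat_power)
  then show ?thesis
    using False by (simp add: field_simps)
qed

lemma two_points_in_set_pmf:
  assumes "measure_pmf.variance X (\<lambda>x. x) \<noteq> 0"
  obtains a b :: real where "a \<in> set_pmf X" "b \<in> set_pmf X" "a \<noteq> b"
proof -
  obtain a where "a \<in> set_pmf X"
    using set_pmf_not_empty by fast
  moreover have "\<not> set_pmf X \<subseteq> {a}"
    using assms by (auto simp: set_pmf_subset_singleton)
  ultimately show ?thesis
    using that by blast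
qed

lemma finite_set_Pi_pmf:
  assumes "finite A" "\<And>x. x \<in> A \<Longrightarrow> finite (set_pmf (p x))"
  shows "finite (set_pmf (Pi_pmf A dflt p))"
  using assms by (simp add: set_Pi_pmf finite_PiE_dflt)

lemma two_point_eval_in_set_pmf:
  assumes "a \<in> set_pmf X" "b \<in> set_pmf X"
  shows "two_point_eval {..<n} c a b U \<in> set_pmf (map_pmf (mpoly_eval n c) (Pi_pmf {..<n} 0 (\<lambda>_. X)))"
proof -
  define x where "x i = (if i < n then if i \<in> U then b else a else 0)" for i
  have "x \<in> set_pmf (Pi_pmf {..<n} 0 (\<lambda>_. X))"
    using assms by (auto simp: set_Pi_pmf PiE_dflt_def x_def)
  moreover have "mpoly_eval n c x = two_point_eval {..<n} c a b U"
    unfolding mpoly_eval_def two_point_eval_def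
    by (intro sum.cong refl arg_cong2[where f = "(*)"] prod.cong) (auto simp: x_def)
  ultimately show ?thesis
    by (metis imageI set_map_pmf)
qed

theorem lemma6p2:
  fixes X :: "real pmf" and n d T :: nat and c :: "nat set \<Rightarrow> real"
  assumes "finite (set_pmf X)"
    and "measure_pmf.expectation X (\<lambda>x. x) = 0"
    and "measure_pmf.variance X (\<lambda>x. x) = 1"
    and "is_multilinear_poly n d c"
    and "sparsity c = T"
  shows "real (card (set_pmf (map_pmf (mpoly_eval n c) (Pi_pmf {..<n} 0 (\<lambda>_. X)))))
           \<ge> 1 / (2 * real d ^ 2) * log 2 (real T) - 3"
proof -
  obtain a b where ab: "a \<in> set_pmf X" "b \<in> set_pmf X" "a \<noteq> b"
    using assms(3) two_points_in_set_pmf[of X] by (metis zero_neq_one)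
  let ?Y = "set_pmf (map_pmf (mpoly_eval n c) (Pi_pmf {..<n} 0 (\<lambda>_. X)))"
  let ?cube_values = "two_point_eval {..<n} c a b ` Pow {..<n}"
  have "finite ?Y"
    using assms(1) by (simp add: finite_set_Pi_pmf)
  moreover have "?cube_values \<subseteq> ?Y"
    using two_point_eval_in_set_pmf[OF ab(1,2)] by blast
  ultimately have "card ?cube_values \<le> card ?Y"
    by (rule card_mono)
  moreover have "1 \<le> card ?cube_values"
    by (auto simp: Suc_le_eq card_gt_0_iff)
  moreover have "card (\<Union>{S. c S \<noteq> 0}) \<le> 4 * (d * (card ?cube_values - 1)) * 2 ^ d"
    using assms(4) ab(3) by (intro card_vars_le_two_point_values) (auto simp: is_multilinear_poly_def)
  moreover have "T \<le> (card (\<Union>{S. c S \<noteq> 0}) + 1) ^ d"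
    using sparsity_le_card_vars[OF assms(4)] assms(5) by simp
  ultimately show ?thesis
    using log_sparsity_bound by blast
qed

end
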